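(* Let $f:[0,T]\times\mathbb{R}\times\mathbb{R}\to\mathbb{R}$ be continuous and suppose there is a constant $c$ with $|f(t,x,y)|\le c<\frac{a}{2T}$ for all $(t,x,y)\in[0,T]\times\mathbb{R}\times\mathbb{R}$. Then the problem $$(\varphi(u'))'=f(t,u,u')\ \text{on }[0,T],\qquad u(T)=u(0)=u'(T)$$ has at least one solution.
   Context: $T>0$, $a>0$, and $\varphi:\mathbb{R}\to(-a,a)$ is a homeomorphism with $\varphi(0)=0$. A solution is a function $u\in C^1([0,T],\mathbb{R})$ satisfying the boundary conditions such that $\varphi\circ u'$ is continuously differentiable and the equation holds for all $t\in[0,T]$. *)

theory Defs
  imports "HOL-Analysis.Analysis"
begin

definition is_solution ::
  "(real \<Rightarrow> real) \<Rightarrow> (real \<Rightarrow> real \<Rightarrow> real \<Rightarrow> real) \<Rightarrow> real \<Rightarrow> (real \<Rightarrow> real) \<Rightarrow> bool" where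
  "is_solution \<phi> f T u \<longleftrightarrow>
     (\<exists>u' w.
        (\<forall>t\<in>{0..T}. (u has_real_derivative u' t) (at t within {0..T})) \<and>
        continuous_on {0..T} u' \<and>
        (\<forall>t\<in>{0..T}. ((\<lambda>s. \<phi> (u' s)) has_real_derivative w t) (at t within {0..T})) \<and>
        continuous_on {0..T} w \<and>
        (\<forall>t\<in>{0..T}. w t = f t (u t) (u' t)) \<and>
        u T = u 0 \<and> u 0 = u' T)"

end

theory Submission
  imports Defs "HOL-Homology.Homology" "HOL-Complex_Analysis.Great_Picard"
begin

text \<open>
  Write \<open>v = \<phi>(u')\<close> and \<open>\<psi> = \<phi>\<inverse>\<close>. A solution is the same as a pair \<open>(G, x)\<close> with
  \<open>v = x + G\<close>, \<open>G(0) = 0\<close>, \<open>G' = f(t, u, u')\<close>, where \<open>u' = \<psi>(x + G)\<close> and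
  \<open>u(t) = u'(T) + \<integral>\<^sub>0\<^sup>t u'\<close>, subject to \<open>\<integral>\<^sub>0\<^sup>T u' = 0\<close> (that is, \<open>u(T) = u(0)\<close>).
  Since \<open>|f| \<le> c\<close>, such a \<open>G\<close> is \<open>c\<close>-Lipschitz, so we look for a fixed point of a map \<open>N\<close>
  on \<open>K = {c-Lipschitz G with G(0) = 0} \<times> [-cT, cT]\<close>, which is compact (Arzela-Ascoli) and
  convex; \<open>c < a/(2T)\<close> keeps \<open>x + G\<close> inside \<open>[-2cT, 2cT] \<subset> (-a, a)\<close>, where \<open>\<psi>\<close> lives.
  The scalar part of \<open>N\<close> is \<open>x \<mapsto> clamp(x - \<sigma> \<integral>\<^sub>0\<^sup>T \<psi>(x + G))\<close> with
  \<open>\<sigma> = sgn \<phi>(1)\<close>: at \<open>x = \<plusminus>cT\<close> the integrand has the sign \<open>\<plusminus>\<sigma>\<close>, so a fixed point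
  forces the integral to vanish. The fixed point comes from Schauder's theorem, derived from
  Brouwer's theorem on simplices via \<open>\<epsilon>\<close>-nets; Brouwer's theorem in turn follows from the
  non-contractibility of spheres.
\<close>

section \<open>Brouwer and Schauder fixed point theorems\<close>

definition nball :: "nat \<Rightarrow> (nat \<Rightarrow> real) set" where
  "nball n = {x. (\<Sum>i\<le>n. x i ^ 2) \<le> 1 \<and> (\<forall>i>n. x i = 0)}"

definition sphere_normalize :: "nat \<Rightarrow> (nat \<Rightarrow> real) \<Rightarrow> nat \<Rightarrow> real" where
  "sphere_normalize n z = (\<lambda>i. z i / sqrt (\<Sum>j\<le>n. z j ^ 2))"

lemma topspace_nsphere_eq:
  "topspace (nsphere n) = {x. (\<Sum>i\<le>n. x i ^ 2) = 1 \<and> (\<forall>i>n. x i = 0)}"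
  by (simp add: nsphere)

lemma nsphere_eq_top_of_set: "nsphere n = top_of_set (topspace (nsphere n))"
  by (simp add: nsphere euclidean_product_topology)

lemma sphere_normalize_nsphere:
  "x \<in> topspace (nsphere n) \<Longrightarrow> sphere_normalize n x = x"
  by (simp add: topspace_nsphere_eq sphere_normalize_def)

lemma sum_power2_pos:
  fixes z :: "nat \<Rightarrow> real"
  assumes "\<And>i. n < i \<Longrightarrow> z i = 0" and "z \<noteq> (\<lambda>_. 0)"
  shows "(\<Sum>j\<le>n. z j ^ 2) > 0"
proof -
  obtain k where "z k \<noteq> 0"
    using assms(2) by (auto simp: fun_eq_iff)
  with assms(1) have "k \<le> n" "z k ^ 2 > 0"
    by (auto simp: not_less[symmetric])
  then show ?thesis
    by (intro sum_pos2[of _ k]) auto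
qed

lemma sphere_normalize_in_nsphere:
  assumes "\<And>i. n < i \<Longrightarrow> z i = 0" and "z \<noteq> (\<lambda>_. 0)"
  shows "sphere_normalize n z \<in> topspace (nsphere n)"
  using sum_power2_pos[of n z, OF assms] assms(1)
  by (simp add: topspace_nsphere_eq sphere_normalize_def power_divide sum_divide_distrib[symmetric])

lemma homotopic_with_sphere_normalize:
  fixes F :: "real \<times> (nat \<Rightarrow> real) \<Rightarrow> nat \<Rightarrow> real" and n :: nat
  defines "S \<equiv> topspace (nsphere n)"
  assumes contF: "continuous_on ({0..1} \<times> S) F"
    and supp: "\<And>p i. p \<in> {0..1} \<times> S \<Longrightarrow> n < i \<Longrightarrow> F p i = 0"
    and nonzero: "\<And>p. p \<in> {0..1} \<times> S \<Longrightarrow> F p \<noteq> (\<lambda>_. 0)"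
    and f: "\<And>x. x \<in> S \<Longrightarrow> f x = sphere_normalize n (F (0, x))"
    and g: "\<And>x. x \<in> S \<Longrightarrow> g x = sphere_normalize n (F (1, x))"
  shows "homotopic_with (\<lambda>_. True) (nsphere n) (nsphere n) f g"
proof -
  have norm_pos: "sqrt (\<Sum>j\<le>n. F p j ^ 2) \<noteq> 0" if "p \<in> {0..1} \<times> S" for p
    using sum_power2_pos[of n "F p", OF supp[OF that] nonzero[OF that]] by simp
  have "continuous_on ({0..1} \<times> S) (\<lambda>p. sphere_normalize n (F p))"
    unfolding sphere_normalize_def using norm_pos
    by (intro continuous_intros continuous_on_product_then_coordinatewise[OF contF]) auto
  moreover have "sphere_normalize n (F p) \<in> S" if "p \<in> {0..1} \<times> S" for p
    unfolding S_def by (rule sphere_normalize_in_nsphere[OF supp[OF that] nonzero[OF that]])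
  ultimately have "continuous_map (prod_topology (top_of_set {0..1}) (nsphere n)) (nsphere n)
      (\<lambda>p. sphere_normalize n (F p))"
    by (subst (1 2) nsphere_eq_top_of_set) (auto simp: S_def)
  then show ?thesis
    using f g unfolding S_def by (subst homotopic_with) auto
qed

lemma continuous_on_coordinate_compose:
  fixes g :: "'a::topological_space \<Rightarrow> 'i \<Rightarrow> 'c::topological_space"
  assumes "continuous_on S g" and "continuous_on A h" and "h \<in> A \<rightarrow> S"
  shows "continuous_on A (\<lambda>p. g (h p) i)"
proof -
  have "continuous_on A (\<lambda>p. g (h p))"
    using assms by (intro continuous_on_compose2[OF assms(1,2)]) (auto simp: image_subset_iff_funcset)
  then show ?thesis
    by (rule continuous_on_product_then_coordinatewise)
qed

lemma continuous_on_snd_coordinate: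
  fixes A :: "('a::topological_space \<times> ('i \<Rightarrow> 'b::topological_space)) set"
  shows "continuous_on A (\<lambda>p. snd p i)"
  by (rule continuous_on_product_then_coordinatewise) (intro continuous_intros)

lemma nsphere_subset_nball: "topspace (nsphere n) \<subseteq> nball n"
  by (auto simp: topspace_nsphere_eq nball_def)

lemma homotopic_id_sphere_normalize_displacement:
  assumes contg: "continuous_on (nball n) g" and gim: "g \<in> nball n \<rightarrow> nball n"
    and nofix: "\<And>x. x \<in> topspace (nsphere n) \<Longrightarrow> g x \<noteq> x"
  shows "homotopic_with (\<lambda>_. True) (nsphere n) (nsphere n) id
    (\<lambda>x. sphere_normalize n (\<lambda>i. x i - g x i))"
proof (rule homotopic_with_sphere_normalize[where F = "\<lambda>(s, x) i. x i - s * g x i"])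
  show "continuous_on ({0..1} \<times> topspace (nsphere n)) (\<lambda>(s, x) i. x i - s * g x i)"
    using nsphere_subset_nball[of n] unfolding case_prod_unfold
    by (intro continuous_on_coordinatewise_then_product continuous_intros
        continuous_on_snd_coordinate continuous_on_coordinate_compose[OF contg]) auto
  show "(\<lambda>(s, x) i. x i - s * g x i) p \<noteq> (\<lambda>_. 0)" if p_in: "p \<in> {0..1} \<times> topspace (nsphere n)" for p
  proof
    obtain s x where p: "p = (s, x)" "s \<in> {0..1}" "x \<in> topspace (nsphere n)"
      using p_in by (cases p) auto
    assume "(\<lambda>(s, x) i. x i - s * g x i) p = (\<lambda>_. 0)"
    then have x_eq: "x i = s * g x i" for i
      by (auto simp: p fun_eq_iff)
    have "1 = (\<Sum>i\<le>n. x i ^ 2)"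
      using p by (simp add: topspace_nsphere_eq)
    also have "\<dots> = s^2 * (\<Sum>i\<le>n. g x i ^ 2)"
      by (simp add: x_eq[of "_"] sum_distrib_left power_mult_distrib)
    also have "\<dots> \<le> s^2"
      using gim p nsphere_subset_nball by (intro mult_left_le) (auto simp: nball_def)
    finally have "1 \<le> s^2" .
    moreover have "s^2 \<le> s"
      using p by (auto simp: power2_eq_square intro: mult_left_le_one_le)
    ultimately have "s = 1"
      using p by auto
    then show False
      using nofix[OF p(3)] x_eq by (auto simp: fun_eq_iff)
  qed
next
  show "(\<lambda>(s, x) i. x i - s * g x i) p i = 0"
    if p_in: "p \<in> {0..1} \<times> topspace (nsphere n)" and i: "n < i" for p i
  proof -
    obtain s x where p: "p = (s, x)" "x \<in> topspace (nsphere n)"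
      using p_in by (cases p) auto
    have "g x \<in> nball n"
      using gim p(2) nsphere_subset_nball by blast
    then show ?thesis
      using p i by (simp add: nball_def topspace_nsphere_eq)
  qed
qed (simp_all add: sphere_normalize_nsphere)

lemma nullhomotopic_sphere_normalize_displacement:
  assumes contg: "continuous_on (nball n) g" and gim: "g \<in> nball n \<rightarrow> nball n"
    and nofix: "\<And>x. x \<in> nball n \<Longrightarrow> g x \<noteq> x"
  shows "homotopic_with (\<lambda>_. True) (nsphere n) (nsphere n)
    (\<lambda>x. sphere_normalize n (\<lambda>i. x i - g x i)) (\<lambda>_. sphere_normalize n (\<lambda>i. - g (\<lambda>_. 0) i))"
proof (rule homotopic_with_sphere_normalize[where F = "\<lambda>(s, x) i. (1 - s) * x i - g (\<lambda>j. (1 - s) * x j) i"])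
  have shrink: "(\<lambda>j. (1 - s) * x j) \<in> nball n" if "s \<in> {0..1}" "x \<in> topspace (nsphere n)" for s x
  proof -
    have "(\<Sum>i\<le>n. ((1 - s) * x i) ^ 2) = (1 - s)^2"
      using that by (simp add: power_mult_distrib sum_distrib_left[symmetric] topspace_nsphere_eq)
    also have "\<dots> \<le> 1"
      using that by (simp add: power_le_one)
    finally show ?thesis
      using that by (auto simp: nball_def topspace_nsphere_eq)
  qed
  show "continuous_on ({0..1} \<times> topspace (nsphere n))
      (\<lambda>(s, x) i. (1 - s) * x i - g (\<lambda>j. (1 - s) * x j) i)"
    using shrink unfolding case_prod_unfold
    by (intro continuous_on_coordinatewise_then_product continuous_intros
        continuous_on_snd_coordinate continuous_on_coordinate_compose[OF contg]) auto
  show "(\<lambda>(s, x) i. (1 - s) * x i - g (\<lambda>j. (1 - s) * x j) i) p \<noteq> (\<lambda>_. 0)"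
    if "p \<in> {0..1} \<times> topspace (nsphere n)" for p
    using that nofix[OF shrink] by (auto simp: fun_eq_iff) metis
  show "(\<lambda>(s, x) i. (1 - s) * x i - g (\<lambda>j. (1 - s) * x j) i) p i = 0"
    if p_in: "p \<in> {0..1} \<times> topspace (nsphere n)" and i: "n < i" for p i
  proof -
    obtain s x where p: "p = (s, x)" "s \<in> {0..1}" "x \<in> topspace (nsphere n)"
      using p_in by (cases p) auto
    have "g (\<lambda>j. (1 - s) * x j) \<in> nball n"
      using gim shrink[OF p(2,3)] by blast
    then show ?thesis
      using p i by (simp add: nball_def topspace_nsphere_eq)
  qed
qed auto

lemma brouwer_nball:
  assumes "continuous_on (nball n) g" and "g \<in> nball n \<rightarrow> nball n"
  obtains x where "x \<in> nball n" and "g x = x"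
proof (rule ccontr)
  assume "\<not> thesis"
  then have "\<And>x. x \<in> nball n \<Longrightarrow> g x \<noteq> x"
    using that by blast
  then have "contractible_space (nsphere n)"
    using homotopic_id_sphere_normalize_displacement[OF assms] nsphere_subset_nball
      nullhomotopic_sphere_normalize_displacement[OF assms]
    unfolding contractible_space_def by (blast intro: homotopic_with_trans)
  then show False
    using non_contractible_space_nsphere by blast
qed

lemma standard_simplex_retract_of_nball: "standard_simplex n retract_of nball n"
proof -
  \<comment> \<open>Keep the positive part, top it up uniformly if its sum is below 1, then rescale.\<close>
  define s where "s = (\<lambda>x::nat \<Rightarrow> real. \<Sum>j\<le>n. max (x j) 0)"
  define r where "r = (\<lambda>x i. if i \<le> n
      then (max (x i) 0 + max 0 (1 - s x) / real (Suc n)) / max (s x) 1 else 0)"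
  have r_simplex: "r x \<in> standard_simplex n" for x
  proof -
    have "(\<Sum>i\<le>n. r x i) = (\<Sum>i\<le>n. max (x i) 0 + max 0 (1 - s x) / real (Suc n)) / max (s x) 1"
      by (simp add: r_def sum_divide_distrib)
    also have "\<dots> = (s x + max 0 (1 - s x)) / max (s x) 1"
      by (simp add: s_def sum.distrib)
    also have "\<dots> = 1"
      by (auto simp: max_def)
    finally have sum1: "(\<Sum>i\<le>n. r x i) = 1" .
    have nonneg: "0 \<le> r x i" for i
      by (simp add: r_def)
    have "r x i \<le> 1" for i
      using member_le_sum[of i "{..n}" "r x"] nonneg sum1 by (cases "i \<le> n") (auto simp: r_def)
    then show ?thesis
      using nonneg sum1 by (simp add: standard_simplex_def r_def)
  qed
  have r_id: "r x = x" if "x \<in> standard_simplex n" for x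
  proof -
    have "s x = 1"
      using that by (simp add: s_def standard_simplex_def)
    with that show ?thesis
      by (auto simp: r_def standard_simplex_def fun_eq_iff max_def not_le[symmetric] intro: antisym)
  qed
  have cont_s: "continuous_on UNIV s"
    unfolding s_def by (intro continuous_intros) simp
  have "continuous_on UNIV (\<lambda>x. r x i)" for i
  proof (cases "i \<le> n")
    case True
    have "continuous_on UNIV (\<lambda>x. (max (x i) 0 + max 0 (1 - s x) / real (Suc n)) / max (s x) 1)"
      by (intro continuous_intros cont_s) auto
    with True show ?thesis
      by (simp add: r_def)
  qed (simp add: r_def)
  then have "continuous_on UNIV r"
    by (rule continuous_on_coordinatewise_then_product)
  moreover have "standard_simplex n \<subseteq> nball n"
  proof
    fix x assume x: "x \<in> standard_simplex n"
    have "(\<Sum>i\<le>n. x i ^ 2) \<le> (\<Sum>i\<le>n. x i)"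
      using x by (intro sum_mono) (auto simp: standard_simplex_def power2_eq_square mult_left_le)
    with x show "x \<in> nball n"
      by (simp add: nball_def standard_simplex_def)
  qed
  ultimately show ?thesis
    unfolding retract_of_def retraction_def
    using r_simplex r_id by (intro exI[of _ r]) (auto intro: continuous_on_subset)
qed

lemma brouwer_standard_simplex:
  assumes "continuous_on (standard_simplex n) g" and "g \<in> standard_simplex n \<rightarrow> standard_simplex n"
  obtains x where "x \<in> standard_simplex n" and "g x = x"
  using retract_fixpoint_property[OF standard_simplex_retract_of_nball _ assms] brouwer_nball
  by metis

lemma ball_partition_of_unity:
  fixes p :: "nat \<Rightarrow> 'a::metric_space"
  assumes cover: "K \<subseteq> (\<Union>i\<le>n. ball (p i) \<epsilon>)"
  obtains w where "continuous_on K w" and "w \<in> K \<rightarrow> standard_simplex n"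
    and "\<And>y i. y \<in> K \<Longrightarrow> w y i \<noteq> 0 \<Longrightarrow> dist (p i) y < \<epsilon>"
proof
  define \<mu> where "\<mu> = (\<lambda>i y. max 0 (\<epsilon> - dist (p i) y))"
  define w where "w = (\<lambda>y i. if i \<le> n then \<mu> i y / (\<Sum>j\<le>n. \<mu> j y) else 0)"
  have \<mu>_pos: "(\<Sum>j\<le>n. \<mu> j y) > 0" if y: "y \<in> K" for y
  proof -
    obtain i where "i \<le> n" "dist (p i) y < \<epsilon>"
      using cover y by auto
    then show ?thesis
      by (intro sum_pos2[of _ i]) (auto simp: \<mu>_def)
  qed
  have "continuous_on K (\<lambda>y. w y i)" for i
  proof (cases "i \<le> n")
    case True
    have "continuous_on K (\<lambda>y. \<mu> i y / (\<Sum>j\<le>n. \<mu> j y))"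
      unfolding \<mu>_def by (intro continuous_intros) (use \<mu>_pos[unfolded \<mu>_def] in fastforce)
    with True show ?thesis
      by (simp add: w_def)
  qed (simp add: w_def)
  then show "continuous_on K w"
    by (rule continuous_on_coordinatewise_then_product)
  show "w \<in> K \<rightarrow> standard_simplex n"
  proof
    fix y assume y: "y \<in> K"
    have "w y i \<le> 1" for i
      using \<mu>_pos[OF y] member_le_sum[of i "{..n}" "\<lambda>j. \<mu> j y"]
      by (auto simp: w_def \<mu>_def)
    with \<mu>_pos[OF y] show "w y \<in> standard_simplex n"
      by (auto simp: standard_simplex_def w_def \<mu>_def sum_divide_distrib[symmetric])
  qed
  show "dist (p i) y < \<epsilon>" if "y \<in> K" "w y i \<noteq> 0" for y i
    using that by (auto simp: w_def \<mu>_def split: if_splits)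
qed

lemma compact_indexed_ball_cover:
  fixes K :: "'a::metric_space set"
  assumes "compact K" and "K \<noteq> {}" and "0 < \<epsilon>"
  obtains N and p :: "nat \<Rightarrow> 'a" where "\<And>i. i \<le> N \<Longrightarrow> p i \<in> K"
    and "K \<subseteq> (\<Union>i\<le>N. ball (p i) \<epsilon>)"
proof -
  obtain P where P: "finite P" "P \<subseteq> K" "K \<subseteq> (\<Union>x\<in>P. ball x \<epsilon>)"
    using seq_compact_imp_totally_bounded[OF compact_imp_seq_compact[OF assms(1)]] assms(3)
    by metis
  obtain M and p :: "nat \<Rightarrow> 'a" where P_eq: "P = p ` {..<M}"
    using finite_imp_nat_seg_image_inj_on[OF P(1)] by (auto simp: lessThan_def)
  moreover have "M \<noteq> 0"
    using P(3) assms(2) P_eq by auto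
  ultimately obtain N where "P = p ` {..N}"
    by (metis lessThan_Suc_atMost not0_implies_Suc)
  with P show thesis
    by (intro that[of N p]) auto
qed

lemma norm_diff_convex_combination_le:
  fixes p :: "nat \<Rightarrow> 'a::real_normed_vector"
  assumes z: "z \<in> standard_simplex N" and near: "\<And>i. z i \<noteq> 0 \<Longrightarrow> norm (y - p i) \<le> \<epsilon>"
  shows "norm (y - (\<Sum>i\<le>N. z i *\<^sub>R p i)) \<le> \<epsilon>"
proof -
  have sum1: "(\<Sum>i\<le>N. z i) = 1" and z_nonneg: "\<And>i. 0 \<le> z i"
    using z by (auto simp: standard_simplex_def)
  have "y - (\<Sum>i\<le>N. z i *\<^sub>R p i) = (\<Sum>i\<le>N. z i *\<^sub>R (y - p i))"
    by (simp add: scaleR_diff_right sum_subtractf sum1 flip: scaleR_sum_left)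
  then have "norm (y - (\<Sum>i\<le>N. z i *\<^sub>R p i)) \<le> (\<Sum>i\<le>N. z i * norm (y - p i))"
    using z_nonneg by (auto intro!: order_trans[OF norm_sum] sum_mono)
  also have "\<dots> \<le> (\<Sum>i\<le>N. z i * \<epsilon>)"
    using near z_nonneg by (intro sum_mono) (metis mult_left_mono mult_zero_left)
  also have "\<dots> = \<epsilon>"
    by (simp add: sum1 flip: sum_distrib_right)
  finally show ?thesis .
qed

lemma schauder_approximate_fixpoint:
  fixes F :: "'a::real_normed_vector \<Rightarrow> 'a"
  assumes K: "compact K" "convex K" "K \<noteq> {}"
    and contF: "continuous_on K F" and FK: "F \<in> K \<rightarrow> K" and \<epsilon>: "\<epsilon> > 0"
  obtains x where "x \<in> K" and "norm (F x - x) \<le> \<epsilon>"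
proof -
  obtain N :: nat and p :: "nat \<Rightarrow> 'a" where p: "\<And>i. i \<le> N \<Longrightarrow> p i \<in> K"
    and cover: "K \<subseteq> (\<Union>i\<le>N. ball (p i) \<epsilon>)"
    using compact_indexed_ball_cover[OF K(1,3) \<epsilon>] by blast
  obtain w where cont_w: "continuous_on K w" and w_simplex: "w \<in> K \<rightarrow> standard_simplex N"
    and w_supp: "\<And>y i. y \<in> K \<Longrightarrow> w y i \<noteq> 0 \<Longrightarrow> dist (p i) y < \<epsilon>"
    using ball_partition_of_unity[OF cover] by metis
  \<comment> \<open>\<open>e\<close> realizes the simplex inside \<open>K\<close> on the \<open>\<epsilon>\<close>-net; a Brouwer fixed point \<open>z\<close>
    of \<open>w \<circ> F \<circ> e\<close> only puts weight on net points \<open>\<epsilon>\<close>-close to \<open>F (e z)\<close>.\<close>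
  define e where "e = (\<lambda>z. \<Sum>i\<le>N. z i *\<^sub>R p i)"
  have e_K: "e z \<in> K" if "z \<in> standard_simplex N" for z
    unfolding e_def using that p by (intro convex_sum K(2)) (auto simp: standard_simplex_def)
  have "continuous_on UNIV e"
    unfolding e_def by (intro continuous_intros) simp
  then have "continuous_on (standard_simplex N) (\<lambda>z. F (e z))"
    using e_K by (intro continuous_on_compose2[OF contF]) (auto intro: continuous_on_subset)
  then have "continuous_on (standard_simplex N) (\<lambda>z. w (F (e z)))"
    using e_K FK by (intro continuous_on_compose2[OF cont_w]) auto
  moreover have "(\<lambda>z. w (F (e z))) \<in> standard_simplex N \<rightarrow> standard_simplex N"
    using e_K FK w_simplex by auto
  ultimately obtain z where z: "z \<in> standard_simplex N" "w (F (e z)) = z"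
    by (rule brouwer_standard_simplex)
  have "F (e z) \<in> K"
    using FK e_K[OF z(1)] by auto
  then have "norm (F (e z) - p i) \<le> \<epsilon>" if "z i \<noteq> 0" for i
    using w_supp[of "F (e z)" i] z(2) that by (simp add: dist_norm norm_minus_commute)
  with z(1) have "norm (F (e z) - e z) \<le> \<epsilon>"
    unfolding e_def by (rule norm_diff_convex_combination_le)
  then show thesis
    using that e_K[OF z(1)] by blast
qed

theorem schauder_fixpoint:
  fixes F :: "'a::real_normed_vector \<Rightarrow> 'a"
  assumes K: "compact K" "convex K" "K \<noteq> {}"
    and contF: "continuous_on K F" and FK: "F \<in> K \<rightarrow> K"
  obtains x where "x \<in> K" and "F x = x"
proof -
  have "\<exists>x\<in>K. norm (F x - x) \<le> 1 / real (Suc k)" for k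
    by (rule schauder_approximate_fixpoint[OF K contF FK, of "1 / real (Suc k)"]) auto
  then obtain x where x: "\<And>k. x k \<in> K" "\<And>k. norm (F (x k) - x k) \<le> 1 / real (Suc k)"
    by metis
  obtain l q where l: "l \<in> K" and q: "strict_mono q" and lim: "(x \<circ> q) \<longlonglongrightarrow> l"
    by (rule seq_compactE[OF compact_imp_seq_compact[OF K(1)], of x]) (use x(1) in auto)
  have "(\<lambda>k. F (x (q k)) - x (q k)) \<longlonglongrightarrow> F l - l"
    using continuous_on_tendsto_compose[OF contF lim[unfolded comp_def] l] x(1) lim
    by (intro tendsto_diff) (auto simp: comp_def)
  moreover have "(\<lambda>k. F (x (q k)) - x (q k)) \<longlonglongrightarrow> 0"
  proof (rule tendsto_norm_zero_cancel, rule Lim_null_comparison[OF _ LIMSEQ_inverse_real_of_nat])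
    have "norm (F (x (q k)) - x (q k)) \<le> inverse (real (Suc k))" for k
    proof -
      have "1 / real (Suc (q k)) \<le> 1 / real (Suc k)"
        using seq_suble[OF q, of k] by (simp add: frac_le)
      with x(2)[of "q k"] show ?thesis
        by (simp add: inverse_eq_divide)
    qed
    then show "\<forall>\<^sub>F k in sequentially. norm (norm (F (x (q k)) - x (q k))) \<le> inverse (real (Suc k))"
      by simp
  qed
  ultimately have "F l - l = 0"
    by (rule LIMSEQ_unique)
  with l that show thesis by simp
qed

lemma clamp_real: "a \<le> b \<Longrightarrow> clamp a b x = max a (min b (x::real))"
  unfolding clamp_def Basis_real_def by auto

lemma clamp_diff_fixpoint_zero:
  fixes a b x d :: real
  assumes "a \<le> b" and "clamp a b (x - d) = x"
    and "x = a \<Longrightarrow> d \<le> 0" and "x = b \<Longrightarrow> 0 \<le> d"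
  shows "d = 0"
  using assms by (auto simp: clamp_real max_def min_def split: if_splits)

lemma ext_cont_clamp:
  fixes a b :: real
  assumes "a \<le> b"
  shows "ext_cont h a b (clamp a b t) = ext_cont h a b t"
  using assms by (simp add: ext_cont_def clamp_real)

lemma ext_cont_in_bcontfun:
  fixes h :: "real \<Rightarrow> 'b::metric_space"
  assumes "continuous_on {a..b} h"
  shows "ext_cont h a b \<in> bcontfun"
proof -
  have "bounded (h ` cbox a b)"
    using assms by (simp add: cbox_interval compact_imp_bounded compact_continuous_image)
  then have "bounded (range (ext_cont h a b))"
    unfolding ext_cont_def by (rule clamp_bounded)
  moreover have "continuous_on UNIV (ext_cont h a b)"
    using assms by (intro continuous_on_ext_cont) (simp add: cbox_interval)
  ultimately show ?thesis
    by (simp add: bcontfun_def)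
qed

lemma lipschitz_on_ext_cont:
  fixes h :: "real \<Rightarrow> 'b::metric_space"
  assumes lip: "L-lipschitz_on {a..b} h" and "a \<le> b"
  shows "L-lipschitz_on UNIV (ext_cont h a b)"
proof -
  have "1-lipschitz_on UNIV (clamp a b)"
    by (rule lipschitz_onI) (auto simp: dist_clamps_le_dist_args)
  moreover have "clamp a b ` UNIV \<subseteq> {a..b}"
    using \<open>a \<le> b\<close> by (auto simp: clamp_real)
  then have "L-lipschitz_on (clamp a b ` UNIV) h"
    by (rule lipschitz_on_subset[OF lip])
  ultimately show ?thesis
    unfolding ext_cont_def using lipschitz_on_compose by fastforce
qed

lemma lipschitz_on_primitive:
  fixes h :: "real \<Rightarrow> 'a::banach"
  assumes "a \<le> b" and h: "continuous_on {a..b} h" and bound: "\<And>t. t \<in> {a..b} \<Longrightarrow> norm (h t) \<le> L"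
  shows "L-lipschitz_on {a..b} (\<lambda>t. integral {a..t} h)"
proof (rule lipschitz_onI)
  have "norm (h a) \<le> L"
    using bound \<open>a \<le> b\<close> by simp
  then show "0 \<le> L"
    by (rule order_trans[OF norm_ge_zero])
  have increasing: "dist (integral {a..t} h) (integral {a..s} h) \<le> L * dist t s"
    if "a \<le> s" "s \<le> t" "t \<le> b" for s t
  proof -
    have "integral {a..s} h + integral {s..t} h = integral {a..t} h"
      using that by (intro Henstock_Kurzweil_Integration.integral_combine integrable_continuous_real
          continuous_on_subset[OF h]) auto
    then have "dist (integral {a..t} h) (integral {a..s} h) = norm (integral {s..t} h)"
      by (metis add_diff_cancel_left' dist_norm)
    also have "\<dots> \<le> L * (t - s)"
      using that bound by (intro integral_bound continuous_on_subset[OF h]) auto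
    finally show ?thesis
      using that by (simp add: dist_real_def)
  qed
  show "dist (integral {a..t} h) (integral {a..s} h) \<le> L * dist t s"
    if "t \<in> {a..b}" "s \<in> {a..b}" for s t
  proof (cases "s \<le> t")
    case True
    then show ?thesis using increasing[of s t] that by simp
  next
    case False
    then show ?thesis using increasing[of t s] that by (simp add: dist_commute)
  qed
qed

lemma uniform_limit_tendsto_const:
  assumes "(g \<longlongrightarrow> l) F"
  shows "uniform_limit S (\<lambda>p _. g p) (\<lambda>_. l) F"
  using tendstoD[OF assms] by (intro uniform_limitI) simp

lemma uniform_limit_Pair:
  assumes f: "uniform_limit S f f0 F" and g: "uniform_limit S g g0 F"
  shows "uniform_limit S (\<lambda>p x. (f p x, g p x)) (\<lambda>x. (f0 x, g0 x)) F"
proof (rule uniform_limitI)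
  fix e :: real assume "e > 0"
  then have "e / 2 > 0" by simp
  from uniform_limitD[OF f this] uniform_limitD[OF g this]
  show "\<forall>\<^sub>F p in F. \<forall>x\<in>S. dist (f p x, g p x) (f0 x, g0 x) < e"
    by eventually_elim
      (use sqrt_sum_squares_le_sum_abs in \<open>fastforce simp: dist_Pair_Pair intro: le_less_trans\<close>)
qed

lemma uniform_limit_ext_cont:
  fixes g :: "'i \<Rightarrow> real \<Rightarrow> 'b::metric_space"
  assumes lim: "uniform_limit {a..b} g g0 F" and "a \<le> b"
  shows "uniform_limit UNIV (\<lambda>p. ext_cont (g p) a b) (ext_cont g0 a b) F"
proof (rule uniform_limitI)
  fix e :: real assume "0 < e"
  from uniform_limitD[OF lim this] show "\<forall>\<^sub>F p in F. \<forall>t\<in>UNIV. dist (ext_cont (g p) a b t) (ext_cont g0 a b t) < e"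
    by eventually_elim (use \<open>a \<le> b\<close> in \<open>auto simp: ext_cont_def clamp_real\<close>)
qed

lemma uniform_limit_primitive:
  fixes g :: "'i \<Rightarrow> real \<Rightarrow> 'a::banach"
  assumes lim: "uniform_limit {a..b} g g0 F"
    and cont: "\<forall>\<^sub>F p in F. continuous_on {a..b} (g p)" and cont0: "continuous_on {a..b} g0"
  shows "uniform_limit {a..b} (\<lambda>p t. integral {a..t} (g p)) (\<lambda>t. integral {a..t} g0) F"
proof (rule uniform_limitI)
  fix e :: real assume "e > 0"
  define d where "d = e / (\<bar>b - a\<bar> + 1)"
  have "d > 0"
    using \<open>e > 0\<close> by (simp add: d_def)
  show "\<forall>\<^sub>F p in F. \<forall>t\<in>{a..b}. dist (integral {a..t} (g p)) (integral {a..t} g0) < e"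
    using uniform_limitD[OF lim \<open>d > 0\<close>] cont
  proof eventually_elim
    case (elim p)
    show ?case
    proof
      fix t assume t: "t \<in> {a..b}"
      have "dist (integral {a..t} (g p)) (integral {a..t} g0) = norm (integral {a..t} (\<lambda>x. g p x - g0 x))"
        using t elim(2) cont0
        by (subst integral_diff) (auto simp: dist_norm intro!: integrable_continuous_real
            intro: continuous_on_subset)
      also have "\<dots> \<le> d * (t - a)"
        using t elim by (intro integral_bound continuous_on_subset[OF continuous_on_diff[OF _ cont0]])
          (auto simp: dist_norm less_imp_le)
      also have "\<dots> \<le> d * \<bar>b - a\<bar>"
        using t \<open>d > 0\<close> by (intro mult_left_mono) auto
      also have "\<dots> < e"
        using \<open>e > 0\<close> by (simp add: d_def field_simps)
      finally show "dist (integral {a..t} (g p)) (integral {a..t} g0) < e" .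
    qed
  qed
qed

lemma sgn_continuous_inj_zero:
  fixes g :: "real \<Rightarrow> real"
  assumes cont: "continuous_on UNIV g" and inj: "inj g" and "g 0 = 0"
  shows "sgn (g x) = sgn (g 1) * sgn x"
proof -
  have between: "(g a < g y \<and> g y < g b) \<or> (g b < g y \<and> g y < g a)" if "a < y" "y < b" for a y b
    using that by (intro continuous_inj_imp_mono continuous_on_subset[OF cont] inj_on_subset[OF inj]) auto
  consider "x < 0" | "x = 0" | "0 < x" "x < 1" | "x = 1" | "1 < x"
    by linarith
  then show ?thesis
  proof cases
    case 1 then show ?thesis using between[of x 0 1] \<open>g 0 = 0\<close> by (auto simp: sgn_if)
  next
    case 2 then show ?thesis using \<open>g 0 = 0\<close> by simp
  next
    case 3 then show ?thesis using between[of 0 x 1] \<open>g 0 = 0\<close> by (auto simp: sgn_if)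
  next
    case 4 then show ?thesis by simp
  next
    case 5 then show ?thesis using between[of 0 1 x] \<open>g 0 = 0\<close> by (auto simp: sgn_if)
  qed
qed

section \<open>Clamped Lipschitz functions\<close>

text \<open>Functions on \<open>[0, T]\<close> are represented by bounded continuous functions on the real line
  that are constant outside \<open>[0, T]\<close>.\<close>

definition clamped_lipschitz :: "real \<Rightarrow> real \<Rightarrow> (real \<Rightarrow>\<^sub>C real) set" where
  "clamped_lipschitz T c =
    {G :: real \<Rightarrow>\<^sub>C real. G 0 = 0 \<and> (\<forall>t. G t = G (clamp 0 T t)) \<and> c-lipschitz_on UNIV G}"

lemma clamped_lipschitzI:
  fixes G :: "real \<Rightarrow>\<^sub>C real"
  shows "G 0 = 0 \<Longrightarrow> (\<And>t. G t = G (clamp 0 T t)) \<Longrightarrow> c-lipschitz_on UNIV G \<Longrightarrow> G \<in> clamped_lipschitz T c"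
  unfolding clamped_lipschitz_def by blast

lemma clamped_lipschitzD:
  fixes G :: "real \<Rightarrow>\<^sub>C real"
  assumes "G \<in> clamped_lipschitz T c"
  shows "G 0 = 0" and "G t = G (clamp 0 T t)" and "c-lipschitz_on UNIV G"
  using assms unfolding clamped_lipschitz_def by blast+

lemma zero_in_clamped_lipschitz: "0 \<le> c \<Longrightarrow> 0 \<in> clamped_lipschitz T c"
  by (rule clamped_lipschitzI) (simp_all add: lipschitz_on_def)

lemma clamped_lipschitz_bound:
  fixes G :: "real \<Rightarrow>\<^sub>C real"
  assumes G: "G \<in> clamped_lipschitz T c" and "0 \<le> T"
  shows "\<bar>G t\<bar> \<le> c * T"
proof -
  have "\<bar>G t\<bar> = dist (G (clamp 0 T t)) (G 0)"
    using clamped_lipschitzD[OF G] by (simp add: dist_real_def)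
  also have "\<dots> \<le> c * dist (clamp 0 T t) 0"
    using clamped_lipschitzD(3)[OF G] by (rule lipschitz_onD) auto
  also have "\<dots> \<le> c * T"
    using \<open>0 \<le> T\<close> clamp_in_interval[of 0 T t] clamped_lipschitzD(3)[OF G]
    by (intro mult_left_mono) (auto simp: lipschitz_on_def dist_real_def)
  finally show ?thesis .
qed

lemma convex_clamped_lipschitz: "convex (clamped_lipschitz T c)"
proof (rule convexI)
  fix G H :: "real \<Rightarrow>\<^sub>C real" and u v :: real
  assume G: "G \<in> clamped_lipschitz T c" and H: "H \<in> clamped_lipschitz T c"
    and uv: "0 \<le> u" "0 \<le> v" "u + v = 1"
  have "(u * c + v * c)-lipschitz_on UNIV (\<lambda>t. u * G t + v * H t)"
    using clamped_lipschitzD(3)[OF G] clamped_lipschitzD(3)[OF H] uv by (intro lipschitz_intros)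
  moreover have "u * c + v * c = c"
    using uv by (metis distrib_right mult_1)
  ultimately show "u *\<^sub>R G + v *\<^sub>R H \<in> clamped_lipschitz T c"
    using clamped_lipschitzD(1,2)[OF G] clamped_lipschitzD(1,2)[OF H]
    by (intro clamped_lipschitzI) auto
qed

lemma closed_clamped_lipschitz: "closed (clamped_lipschitz T c)"
  unfolding closed_sequential_limits
proof (intro allI impI, elim conjE)
  fix G :: "nat \<Rightarrow> real \<Rightarrow>\<^sub>C real" and l assume G: "\<forall>n. G n \<in> clamped_lipschitz T c" and lim: "G \<longlonglongrightarrow> l"
  have pointwise: "(\<lambda>n. G n t) \<longlonglongrightarrow> l t" for t
    using tendsto_uniform_limitI[OF tendsto_bcontfun_uniform_limit[OF lim]] by simp
  note GD = clamped_lipschitzD[OF G[rule_format]]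
  show "l \<in> clamped_lipschitz T c"
  proof (rule clamped_lipschitzI)
    show "l 0 = 0"
      using GD(1) by (intro LIMSEQ_unique[OF pointwise]) simp
    show "l t = l (clamp 0 T t)" for t
    proof (rule LIMSEQ_unique[OF pointwise[of t]])
      show "(\<lambda>n. G n t) \<longlonglongrightarrow> l (clamp 0 T t)"
        using pointwise[of "clamp 0 T t"] by (simp only: GD(2)[symmetric])
    qed
    show "c-lipschitz_on UNIV l"
    proof (rule lipschitz_onI)
      show "0 \<le> c"
        using GD(3)[of 0] by (simp add: lipschitz_on_def)
      show "dist (l s) (l t) \<le> c * dist s t" for s t
      proof (rule tendsto_le[OF trivial_limit_sequentially tendsto_const
            tendsto_dist[OF pointwise pointwise]])
        show "\<forall>\<^sub>F n in sequentially. dist (G n s) (G n t) \<le> c * dist s t"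
          using lipschitz_onD[OF GD(3)] by simp
      qed
    qed
  qed
qed

lemma clamped_lipschitz_uniform_subseq:
  fixes G :: "nat \<Rightarrow> real \<Rightarrow>\<^sub>C real"
  assumes "0 \<le> T" and G: "\<And>n. G n \<in> clamped_lipschitz T c"
  obtains g k where "continuous_on {0..T} g" and "strict_mono (k :: nat \<Rightarrow> nat)"
    and "uniform_limit {0..T} (\<lambda>n. G (k n)) g sequentially"
proof -
  note GD = clamped_lipschitzD[OF G]
  have "0 \<le> c"
    using GD(3)[of 0] by (simp add: lipschitz_on_def)
  obtain g k where g: "continuous_on {0..T} g" and k: "strict_mono (k :: nat \<Rightarrow> nat)"
    and unif: "\<And>e. 0 < e \<Longrightarrow> \<exists>N. \<forall>n t. n \<ge> N \<and> t \<in> {0..T} \<longrightarrow> norm (G (k n) t - g t) < e"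
  proof (rule Arzela_Ascoli[of "{0..T}" "\<lambda>n. apply_bcontfun (G n)" "c * T"])
    show "norm (G n t) \<le> c * T" for n t
      using G assms clamped_lipschitz_bound by auto
    show "\<exists>d>0. \<forall>n s. s \<in> {0..T} \<and> norm (t - s) < d \<longrightarrow> norm (G n t - G n s) < e"
      if "0 < e" for t e
    proof (intro exI[of _ "e / (c + 1)"] conjI allI impI)
      show "0 < e / (c + 1)"
        using that \<open>0 \<le> c\<close> by simp
      fix n s assume "s \<in> {0..T} \<and> norm (t - s) < e / (c + 1)"
      then have "dist t s * (c + 1) < e"
        using \<open>0 \<le> c\<close> by (simp add: dist_norm pos_less_divide_eq)
      moreover have "c * dist t s \<le> dist t s * (c + 1)"
        by (simp add: algebra_simps)
      ultimately have "c * dist t s < e"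
        by linarith
      then show "norm (G n t - G n s) < e"
        using lipschitz_onD[OF GD(3)[of n], of t s] by (simp add: dist_norm)
    qed
  qed auto
  have "uniform_limit {0..T} (\<lambda>n. G (k n)) g sequentially"
    by (rule uniform_limitI) (use unif in \<open>fastforce simp: dist_norm eventually_sequentially\<close>)
  with g k that show thesis
    by blast
qed

lemma compact_clamped_lipschitz:
  assumes "0 \<le> T"
  shows "compact (clamped_lipschitz T c)"
  unfolding compact_eq_seq_compact_metric seq_compact_def
proof (intro allI impI)
  fix G :: "nat \<Rightarrow> real \<Rightarrow>\<^sub>C real" assume G: "\<forall>n. G n \<in> clamped_lipschitz T c"
  then obtain g k where g: "continuous_on {0..T} g" and k: "strict_mono (k :: nat \<Rightarrow> nat)"
    and lim: "uniform_limit {0..T} (\<lambda>n. G (k n)) g sequentially"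
    using clamped_lipschitz_uniform_subseq[OF assms] by metis
  have "ext_cont (G n) 0 T = G n" for n
    unfolding ext_cont_def by (rule ext) (use clamped_lipschitzD(2) G in metis)
  then have "uniform_limit UNIV (\<lambda>n. G (k n)) (ext_cont g 0 T) sequentially"
    using uniform_limit_ext_cont[OF lim assms] by simp
  then have "(G \<circ> k) \<longlonglongrightarrow> Bcontfun (ext_cont g 0 T)"
    using ext_cont_in_bcontfun[OF g]
    by (intro uniform_limit_tendsto_bcontfun) (simp add: Bcontfun_inverse comp_def)
  moreover have "Bcontfun (ext_cont g 0 T) \<in> clamped_lipschitz T c"
    using closed_clamped_lipschitz[unfolded closed_sequential_limits] G calculation
    by (metis comp_apply)
  ultimately show "\<exists>l\<in>clamped_lipschitz T c. \<exists>r. strict_mono r \<and> (G \<circ> r) \<longlonglongrightarrow> l"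
    using k by blast
qed

section \<open>The fixed point problem\<close>

locale phi_laplacian_problem =
  fixes \<phi> \<psi> :: "real \<Rightarrow> real" and f :: "real \<Rightarrow> real \<Rightarrow> real \<Rightarrow> real" and T a c :: real
  assumes T_pos: "0 < T"
    and homeo: "homeomorphism UNIV {-a<..<a} \<phi> \<psi>"
    and \<phi>_zero: "\<phi> 0 = 0"
    and f_cont: "continuous_on ({0..T} \<times> UNIV \<times> UNIV) (\<lambda>(t, x, y). f t x y)"
    and f_bound: "\<And>t x y. t \<in> {0..T} \<Longrightarrow> \<bar>f t x y\<bar> \<le> c"
    and small: "2 * (c * T) < a"
begin

abbreviation M :: real where "M \<equiv> c * T"

definition K :: "((real \<Rightarrow>\<^sub>C real) \<times> real) set" where
  "K = clamped_lipschitz T c \<times> {-M..M}"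

text \<open>For \<open>p = (G, x)\<close>: \<open>du p\<close> is \<open>u' = \<psi>(x + G)\<close>, \<open>u p\<close> is the candidate solution
  (normalised by \<open>u(0) = u'(T)\<close>) and \<open>rhs p\<close> is \<open>f(t, u, u')\<close>.\<close>

definition du :: "(real \<Rightarrow>\<^sub>C real) \<times> real \<Rightarrow> real \<Rightarrow> real" where
  "du p t = \<psi> (snd p + apply_bcontfun (fst p) t)"

definition u :: "(real \<Rightarrow>\<^sub>C real) \<times> real \<Rightarrow> real \<Rightarrow> real" where
  "u p t = du p T + integral {0..t} (du p)"

definition rhs :: "(real \<Rightarrow>\<^sub>C real) \<times> real \<Rightarrow> real \<Rightarrow> real" where
  "rhs p t = f t (u p t) (du p t)"

definition \<sigma> :: real where
  "\<sigma> = sgn (\<phi> 1)"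

definition N :: "(real \<Rightarrow>\<^sub>C real) \<times> real \<Rightarrow> (real \<Rightarrow>\<^sub>C real) \<times> real" where
  "N p = (Bcontfun (ext_cont (\<lambda>t. integral {0..t} (rhs p)) 0 T),
          clamp (-M) M (snd p - \<sigma> * integral {0..T} (du p)))"

lemma c_nonneg: "0 \<le> c"
  using f_bound[of 0 0 0] T_pos by force

lemma \<phi>_\<psi>_cancel: "z \<in> {-a<..<a} \<Longrightarrow> \<phi> (\<psi> z) = z"
  using homeo by (simp add: homeomorphism_def)

lemma K_argument_bound:
  assumes "p \<in> K"
  shows "snd p + apply_bcontfun (fst p) t \<in> {-2 * M..2 * M}"
  using assms clamped_lipschitz_bound[of "fst p" T c t] T_pos by (auto simp: K_def abs_le_iff)

lemma argument_interval_subset: "{-2 * M..2 * M} \<subseteq> {-a<..<a}"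
  using small by auto

lemma continuous_on_\<psi>: "continuous_on {-2 * M..2 * M} \<psi>"
  using homeo argument_interval_subset by (auto simp: homeomorphism_def intro: continuous_on_subset)

lemma continuous_on_du:
  assumes "p \<in> K"
  shows "continuous_on S (du p)"
  unfolding du_def using K_argument_bound[OF assms]
  by (intro continuous_on_compose2[OF continuous_on_\<psi>] continuous_intros) auto

lemma continuous_on_u: "p \<in> K \<Longrightarrow> continuous_on {0..T} (u p)"
  unfolding u_def
  by (intro continuous_intros indefinite_integral_continuous_1 integrable_continuous_real continuous_on_du)

lemma continuous_on_rhs:
  assumes "p \<in> K"
  shows "continuous_on {0..T} (rhs p)"
proof -
  have "continuous_on {0..T} (\<lambda>t. (t, u p t, du p t))"
    using assms by (intro continuous_intros continuous_on_u continuous_on_du)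
  then show ?thesis
    unfolding rhs_def using continuous_on_compose2[OF f_cont] by fastforce
qed

lemma N_fst:
  assumes "p \<in> K"
  shows "apply_bcontfun (fst (N p)) = ext_cont (\<lambda>t. integral {0..t} (rhs p)) 0 T"
  using assms T_pos
  by (simp add: N_def Bcontfun_inverse ext_cont_in_bcontfun indefinite_integral_continuous_1
      integrable_continuous_real continuous_on_rhs)

lemma N_in_K:
  assumes p: "p \<in> K"
  shows "N p \<in> K"
proof -
  have lip: "c-lipschitz_on {0..T} (\<lambda>t. integral {0..t} (rhs p))"
    using T_pos f_bound by (intro lipschitz_on_primitive continuous_on_rhs p) (auto simp: rhs_def)
  have "fst (N p) \<in> clamped_lipschitz T c"
  proof (rule clamped_lipschitzI)
    show "fst (N p) 0 = 0"
      using T_pos by (simp add: N_fst[OF p] ext_cont_def clamp_real)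
    show "fst (N p) t = fst (N p) (clamp 0 T t)" for t
      using T_pos by (simp add: N_fst[OF p] ext_cont_clamp)
    show "c-lipschitz_on UNIV (fst (N p))"
      using lipschitz_on_ext_cont[OF lip] T_pos by (simp add: N_fst[OF p])
  qed
  moreover have "snd (N p) \<in> {-M..M}"
    using clamp_in_interval[of "-M" M] c_nonneg T_pos by (simp add: N_def cbox_interval)
  ultimately show ?thesis
    by (simp add: K_def mem_Times_iff)
qed

lemma eventually_in_K: "\<forall>\<^sub>F p in at q within K. p \<in> K"
  by (simp add: eventually_at_filter)

lemma du_u_bound:
  obtains B where "\<And>p t. p \<in> K \<Longrightarrow> \<bar>du p t\<bar> \<le> B"
    and "\<And>p t. p \<in> K \<Longrightarrow> t \<in> {0..T} \<Longrightarrow> \<bar>u p t\<bar> \<le> B"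
proof -
  have "bounded (\<psi> ` {-2 * M..2 * M})"
    by (intro compact_imp_bounded compact_continuous_image continuous_on_\<psi> compact_Icc)
  then obtain B where "\<forall>y\<in>\<psi> ` {-2 * M..2 * M}. norm y \<le> B"
    by (auto simp: bounded_iff)
  then have B: "\<And>z. z \<in> {-2 * M..2 * M} \<Longrightarrow> \<bar>\<psi> z\<bar> \<le> B"
    by auto
  have "0 \<le> B"
    using B[of 0] c_nonneg T_pos by simp
  have du: "\<bar>du p t\<bar> \<le> B" if "p \<in> K" for p t
    using B K_argument_bound[OF that] by (simp add: du_def)
  have u: "\<bar>u p t\<bar> \<le> B + B * T" if "p \<in> K" "t \<in> {0..T}" for p t
  proof -
    have "\<bar>integral {0..t} (du p)\<bar> \<le> B * (t - 0)"
      using that du by (intro integral_bound[where f = "du p", simplified] continuous_on_du) auto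
    also have "\<dots> \<le> B * T"
      using that \<open>0 \<le> B\<close> by (intro mult_left_mono) auto
    finally show ?thesis
      using du[OF that(1), of T] by (simp add: u_def)
  qed
  have "B \<le> B + B * T"
    using \<open>0 \<le> B\<close> T_pos by simp
  show thesis
  proof (rule that)
    show "\<bar>du p t\<bar> \<le> B + B * T" if "p \<in> K" for p t
      using du[OF that, of t] \<open>B \<le> B + B * T\<close> by linarith
  qed (rule u)
qed

lemma uniform_limit_du:
  assumes "q \<in> K"
  shows "uniform_limit UNIV du (du q) (at q within K)"
proof -
  have fst_lim: "uniform_limit UNIV (\<lambda>p. apply_bcontfun (fst p)) (fst q) (at q within K)"
    by (rule tendsto_bcontfun_uniform_limit) (intro tendsto_fst tendsto_ident_at)
  have snd_lim: "uniform_limit UNIV (\<lambda>p _. snd p) (\<lambda>_. snd q) (at q within K)"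
    by (rule uniform_limit_tendsto_const) (intro tendsto_snd tendsto_ident_at)
  have "uniform_limit UNIV (\<lambda>p t. snd p + apply_bcontfun (fst p) t)
      (\<lambda>t. snd q + apply_bcontfun (fst q) t) (at q within K)"
    using uniform_limit_add[OF snd_lim fst_lim] by simp
  moreover have "uniformly_continuous_on {-2 * M..2 * M} \<psi>"
    by (rule compact_uniformly_continuous[OF continuous_on_\<psi> compact_Icc])
  moreover have "\<forall>\<^sub>F p in at q within K. \<forall>t\<in>UNIV. snd p + apply_bcontfun (fst p) t \<in> {-2 * M..2 * M}"
    using eventually_in_K[of q] by eventually_elim (use K_argument_bound in blast)
  ultimately show ?thesis
    unfolding du_def[abs_def]
    using closed_atLeastAtMost by (rule uniform_limit_compose_uniformly_continuous_on)
qed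

lemma uniform_limit_integral_du:
  assumes "q \<in> K"
  shows "uniform_limit {0..T} (\<lambda>p t. integral {0..t} (du p)) (\<lambda>t. integral {0..t} (du q))
    (at q within K)"
proof (rule uniform_limit_primitive)
  show "uniform_limit {0..T} du (du q) (at q within K)"
    using uniform_limit_on_subset[OF uniform_limit_du[OF assms] subset_UNIV] .
  show "\<forall>\<^sub>F p in at q within K. continuous_on {0..T} (du p)"
    using eventually_in_K[of q] by eventually_elim (rule continuous_on_du)
  show "continuous_on {0..T} (du q)"
    using assms by (rule continuous_on_du)
qed

lemma uniform_limit_u:
  assumes "q \<in> K"
  shows "uniform_limit {0..T} u (u q) (at q within K)"
proof -
  have "((\<lambda>p. du p T) \<longlongrightarrow> du q T) (at q within K)"
    using tendsto_uniform_limitI[OF uniform_limit_du[OF assms] UNIV_I] .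
  then have "uniform_limit {0..T} (\<lambda>p _. du p T) (\<lambda>_. du q T) (at q within K)"
    by (rule uniform_limit_tendsto_const)
  from uniform_limit_add[OF this uniform_limit_integral_du[OF assms]] show ?thesis
    by (simp add: u_def[abs_def])
qed

lemma uniform_limit_rhs:
  assumes "q \<in> K"
  shows "uniform_limit {0..T} rhs (rhs q) (at q within K)"
proof -
  obtain B where du: "\<And>p t. p \<in> K \<Longrightarrow> \<bar>du p t\<bar> \<le> B"
    and u: "\<And>p t. p \<in> K \<Longrightarrow> t \<in> {0..T} \<Longrightarrow> \<bar>u p t\<bar> \<le> B"
    using du_u_bound by blast
  define box where "box = {0..T} \<times> {-B..B} \<times> {-B..B}"
  have "uniform_limit {0..T} (\<lambda>p s. (u p s, du p s)) (\<lambda>s. (u q s, du q s)) (at q within K)"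
    by (rule uniform_limit_Pair[OF uniform_limit_u[OF assms]
          uniform_limit_on_subset[OF uniform_limit_du[OF assms] subset_UNIV]])
  then have "uniform_limit {0..T} (\<lambda>p s. (s, u p s, du p s)) (\<lambda>s. (s, u q s, du q s)) (at q within K)"
    by (rule uniform_limit_Pair[OF uniform_limit_const])
  moreover have "uniformly_continuous_on box (\<lambda>(t, x, y). f t x y)"
    by (rule compact_uniformly_continuous[OF continuous_on_subset[OF f_cont]])
      (auto simp: box_def intro!: compact_Times)
  moreover have "\<forall>\<^sub>F p in at q within K. \<forall>s\<in>{0..T}. (s, u p s, du p s) \<in> box"
    using eventually_in_K[of q]
  proof eventually_elim
    case (elim p)
    then show ?case
      using du[OF elim] u[OF elim] by (auto simp: box_def abs_le_iff minus_le_iff)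
  qed
  moreover have "closed box"
    unfolding box_def by (intro closed_Times closed_atLeastAtMost)
  ultimately have "uniform_limit {0..T} (\<lambda>p s. (\<lambda>(t, x, y). f t x y) (s, u p s, du p s))
      (\<lambda>s. (\<lambda>(t, x, y). f t x y) (s, u q s, du q s)) (at q within K)"
    by (rule uniform_limit_compose_uniformly_continuous_on)
  then show ?thesis
    by (simp add: rhs_def[abs_def])
qed

lemma continuous_on_N: "continuous_on K N"
  unfolding continuous_on_def
proof
  fix q assume q: "q \<in> K"
  have lim: "uniform_limit UNIV (\<lambda>p. ext_cont (\<lambda>t. integral {0..t} (rhs p)) 0 T)
      (ext_cont (\<lambda>t. integral {0..t} (rhs q)) 0 T) (at q within K)"
  proof (intro uniform_limit_ext_cont uniform_limit_primitive uniform_limit_rhs q continuous_on_rhs)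
    show "\<forall>\<^sub>F p in at q within K. continuous_on {0..T} (rhs p)"
      using eventually_in_K[of q] by eventually_elim (rule continuous_on_rhs)
  qed (use T_pos in simp)
  have "\<forall>\<^sub>F p in at q within K.
      \<forall>t\<in>UNIV. ext_cont (\<lambda>t. integral {0..t} (rhs p)) 0 T t = fst (N p) t"
    using eventually_in_K[of q] by eventually_elim (simp add: N_fst)
  from uniform_limit_cong[OF this] lim
  have "uniform_limit UNIV (\<lambda>p. fst (N p)) (fst (N q)) (at q within K)"
    by (simp add: N_fst[OF q])
  then have fst_lim: "((\<lambda>p. fst (N p)) \<longlongrightarrow> fst (N q)) (at q within K)"
    by (rule uniform_limit_tendsto_bcontfun)
  have "T \<in> {0..T}"
    using T_pos by simp
  from tendsto_uniform_limitI[OF uniform_limit_integral_du[OF q] this]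
  have "((\<lambda>p. snd p - \<sigma> * integral {0..T} (du p)) \<longlongrightarrow> snd q - \<sigma> * integral {0..T} (du q))
      (at q within K)"
    by (rule tendsto_diff[OF tendsto_snd[OF tendsto_ident_at] tendsto_mult_left])
  then have snd_lim: "((\<lambda>p. snd (N p)) \<longlongrightarrow> snd (N q)) (at q within K)"
    unfolding N_def snd_conv
    by (rule isCont_tendsto_compose[OF clamp_continuous_at[OF continuous_on_id]])
  show "(N \<longlongrightarrow> N q) (at q within K)"
    using tendsto_Pair[OF fst_lim snd_lim] by simp
qed

lemma \<phi>_inj: "inj \<phi>"
  using homeo by (metis homeomorphism_def injI UNIV_I)

lemma \<sigma>_nonzero: "\<sigma> \<noteq> 0"
  using inj_eq[OF \<phi>_inj, of 1 0] \<phi>_zero by (auto simp: \<sigma>_def sgn_if)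

lemma sgn_\<sigma>_du:
  assumes "p \<in> K"
  shows "sgn (\<sigma> * du p t) = sgn (snd p + apply_bcontfun (fst p) t)"
proof -
  let ?z = "snd p + apply_bcontfun (fst p) t"
  have "continuous_on UNIV \<phi>"
    using homeo by (simp add: homeomorphism_def)
  from sgn_continuous_inj_zero[OF this \<phi>_inj \<phi>_zero]
  have "sgn ?z = \<sigma> * sgn (\<psi> ?z)"
    using \<phi>_\<psi>_cancel K_argument_bound[OF assms] argument_interval_subset by (metis \<sigma>_def subsetD)
  then show ?thesis
    by (simp add: du_def sgn_mult \<sigma>_def)
qed

lemma integral_du_sign:
  assumes p: "p \<in> K"
  shows "snd p = M \<Longrightarrow> 0 \<le> \<sigma> * integral {0..T} (du p)"
    and "snd p = -M \<Longrightarrow> \<sigma> * integral {0..T} (du p) \<le> 0"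
proof -
  have int: "(\<lambda>t. \<sigma> * du p t) integrable_on {0..T}"
    by (intro integrable_continuous_real continuous_intros continuous_on_du p)
  have G: "\<bar>apply_bcontfun (fst p) t\<bar> \<le> M" for t
    using p T_pos clamped_lipschitz_bound by (auto simp: K_def)
  show "0 \<le> \<sigma> * integral {0..T} (du p)" if "snd p = M"
  proof -
    have "0 \<le> \<sigma> * du p t" for t
      using sgn_\<sigma>_du[OF p, of t] G[of t] that by (auto simp: sgn_if abs_le_iff split: if_splits)
    then show ?thesis
      using integral_nonneg[OF int] by simp
  qed
  show "\<sigma> * integral {0..T} (du p) \<le> 0" if "snd p = -M"
  proof -
    have "\<sigma> * du p t \<le> 0" for t
      using sgn_\<sigma>_du[OF p, of t] G[of t] that by (auto simp: sgn_if abs_le_iff split: if_splits)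
    then show ?thesis
      using integral_le[OF int integrable_0] by simp
  qed
qed

lemma fixpoint_is_solution:
  assumes p: "p \<in> K" and fixed: "N p = p"
  shows "is_solution \<phi> f T (u p)"
proof -
  have G: "apply_bcontfun (fst p) t = integral {0..t} (rhs p)" if "t \<in> {0..T}" for t
    using N_fst[OF p] that T_pos by (simp add: fixed ext_cont_def clamp_real)
  have "clamp (-M) M (snd p - \<sigma> * integral {0..T} (du p)) = snd p"
    using arg_cong[OF fixed, of snd] by (simp add: N_def)
  then have "\<sigma> * integral {0..T} (du p) = 0"
    using c_nonneg T_pos integral_du_sign[OF p] by (intro clamp_diff_fixpoint_zero) auto
  then have no_drift: "integral {0..T} (du p) = 0"
    using \<sigma>_nonzero by simp
  have \<phi>_du: "\<phi> (du p s) = snd p + integral {0..s} (rhs p)" if "s \<in> {0..T}" for s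
    using \<phi>_\<psi>_cancel K_argument_bound[OF p] argument_interval_subset G[OF that]
    by (metis du_def subsetD)
  show ?thesis
    unfolding is_solution_def
  proof (intro exI conjI ballI)
    fix t assume t: "t \<in> {0..T}"
    show "(u p has_real_derivative du p t) (at t within {0..T})"
      using DERIV_add[OF DERIV_const integral_has_real_derivative[OF continuous_on_du[OF p] t]]
      by (simp add: u_def[abs_def])
    have "((\<lambda>s. snd p + integral {0..s} (rhs p)) has_real_derivative rhs p t) (at t within {0..T})"
      using DERIV_add[OF DERIV_const integral_has_real_derivative[OF continuous_on_rhs[OF p] t]]
      by simp
    then show "((\<lambda>s. \<phi> (du p s)) has_real_derivative rhs p t) (at t within {0..T})"
      by (rule has_field_derivative_transform_within[OF _ zero_less_one t]) (simp add: \<phi>_du)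
    show "rhs p t = f t (u p t) (du p t)"
      by (rule rhs_def)
  next
    show "continuous_on {0..T} (du p)" "continuous_on {0..T} (rhs p)"
      using p by (rule continuous_on_du, rule continuous_on_rhs)
    show "u p T = u p 0" "u p 0 = du p T"
      using no_drift by (simp_all add: u_def)
  qed
qed

lemma N_has_fixpoint:
  obtains p where "p \<in> K" and "N p = p"
proof (rule schauder_fixpoint)
  show "compact K"
    using T_pos by (simp add: K_def compact_Times compact_clamped_lipschitz)
  show "convex K"
    by (simp add: K_def convex_Times convex_clamped_lipschitz)
  show "K \<noteq> {}"
    using zero_in_clamped_lipschitz[OF c_nonneg] c_nonneg T_pos by (auto simp: K_def)
  show "N \<in> K \<rightarrow> K"
    using N_in_K by blast
qed (use continuous_on_N in auto)

end

theorem theorem4p1: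
  fixes \<phi> :: "real \<Rightarrow> real" and f :: "real \<Rightarrow> real \<Rightarrow> real \<Rightarrow> real"
    and T a c :: real
  assumes "T > 0" and "a > 0"
    and "\<exists>\<psi>. homeomorphism UNIV {-a<..<a} \<phi> \<psi>"
    and "\<phi> 0 = 0"
    and "continuous_on ({0..T} \<times> UNIV \<times> UNIV) (\<lambda>(t, x, y). f t x y)"
    and "\<forall>t\<in>{0..T}. \<forall>x y. \<bar>f t x y\<bar> \<le> c"
    and "c < a / (2 * T)"
  shows "\<exists>u. is_solution \<phi> f T u"
proof -
  obtain \<psi> where "homeomorphism UNIV {-a<..<a} \<phi> \<psi>"
    using assms(3) by blast
  moreover have "2 * (c * T) < a"
    using assms(1,7) by (simp add: field_simps)
  ultimately interpret phi_laplacian_problem \<phi> \<psi> f T a c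
    using assms by unfold_locales auto
  obtain p where "p \<in> K" and "N p = p"
    by (rule N_has_fixpoint)
  then show ?thesis
    using fixpoint_is_solution by blast
qed

end
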